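(* Let $K\subset\mathbb{R}^m$ be a pointed, closed, convex cone with nonempty interior, let $C\subset\mathbb{R}^m$ be a compact set with $0\notin C$ and $K^*=\operatorname{cone}(\operatorname{conv}(C))$, and let $F:\mathbb{R}^n\to\mathbb{R}^m$ be continuously differentiable with Jacobian $JF$. Define $h(x,d)=\sup\{\langle JF(x)d,w\rangle : w\in C\}$ and $v(x)=\arg\min_{d\in\mathbb{R}^n}\{h(x,d)+\tfrac12\|d\|^2\}$. Fix $\mu>2$. Let $\{x^k\}$ and $\{d^k\}$ be generated by the following scheme with arbitrary positive stepsizes $\alpha_k$: $x^0\in\mathbb{R}^n$ arbitrary; at iteration $k$, if $v(x^k)=0$ stop; otherwise set $d^0=v(x^0)$ and, for $k\ge1$, $d^k=v(x^k)+\beta_k d^{k-1}$, where $$\beta_k=\frac{-h(x^k,v(x^k))\big(|h(x^{k-1},v(x^k))|+h(x^{k-1},v(x^k))\big)}{\max\big\{\mu\,|h(x^k,d^{k-1})\,h(x^{k-1},v(x^k))|,\ -\mu\, h(x^{k-1},v(x^{k-1}))\,|h(x^{k-1},v(x^k))|\big\}},$$ and then $x^{k+1}=x^k+\alpha_k d^k$. Then for every $k\ge0$, $$h(x^k,d^k)\le\Big(1-\frac{2}{\mu}\Big)h(x^k,v(x^k)),$$ i.e. $d^k$ satisfies the sufficient descent condition $h(x^k,d^k)\le c\,h(x^k,v(x^k))$ with $c=1-\frac{2}{\mu}$.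
   Context: $K^*=\{w\in\mathbb{R}^m:\langle y,w\rangle\ge0\ \forall y\in K\}$ is the positive polar cone of $K$. The map $h$ is well defined since $C$ is compact, and $v(x)$ is the unique minimizer of the strongly convex function $d\mapsto h(x,d)+\frac12\|d\|^2$. A vector $d$ is a $K$-descent direction at $x$ iff $h(x,d)<0$, and $v(x)=0$ iff $x$ is a $K$-Pareto critical point, i.e. $\operatorname{Im}(JF(x))\cap(-\operatorname{int}K)=\emptyset$. *)

theory Defs
  imports "HOL-Analysis.Analysis"
begin

definition pos_polar :: "('a::real_inner) set \<Rightarrow> 'a set" where
  "pos_polar K = {w. \<forall>y\<in>K. inner y w \<ge> 0}"

definition pointed :: "('a::real_vector) set \<Rightarrow> bool" where
  "pointed K \<longleftrightarrow> (\<forall>y. y \<in> K \<and> - y \<in> K \<longrightarrow> y = 0)"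

definition hfun :: "(real^'n \<Rightarrow> real^'n^'m) \<Rightarrow> (real^'m) set \<Rightarrow> real^'n \<Rightarrow> real^'n \<Rightarrow> real" where
  "hfun JF C x d = Sup ((\<lambda>w. inner (JF x *v d) w) ` C)"

definition vfun :: "(real^'n \<Rightarrow> real^'n^'m) \<Rightarrow> (real^'m) set \<Rightarrow> real^'n \<Rightarrow> real^'n" where
  "vfun JF C x = (THE d. \<forall>d'. hfun JF C x d + (1/2) * (norm d)^2 \<le> hfun JF C x d' + (1/2) * (norm d')^2)"

text \<open>The parameter beta_k, computed from x^{k-1} (xp), x^k (xk), d^{k-1} (dp).\<close>
definition beta_k :: "(real^'n \<Rightarrow> real^'n^'m) \<Rightarrow> (real^'m) set \<Rightarrow> real \<Rightarrow> real^'n \<Rightarrow> real^'n \<Rightarrow> real^'n \<Rightarrow> real" where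
  "beta_k JF C \<mu> xp xk dp =
     (- hfun JF C xk (vfun JF C xk) * (\<bar>hfun JF C xp (vfun JF C xk)\<bar> + hfun JF C xp (vfun JF C xk)))
     / max (\<mu> * \<bar>hfun JF C xk dp * hfun JF C xp (vfun JF C xk)\<bar>)
           (- \<mu> * hfun JF C xp (vfun JF C xp) * \<bar>hfun JF C xp (vfun JF C xk)\<bar>)"

end

theory Submission
  imports Defs
begin

text \<open>The function h(x,-) is the support function of C composed with the linear map JF(x), hence
sublinear and Lipschitz; so the regularized problem defining v(x) has a unique minimizer, and comparing
it with d = 0 gives h(x, v(x)) <= 0. The choice of beta_k makes beta_k >= 0 and
beta_k h(x_k, d_(k-1)) <= -(2/\<mu>) h(x_k, v(x_k)): the denominator dominates
\<mu> |h(x_k, d_(k-1))| |h(x_(k-1), v(x_k))| while the numerator is at most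
2 (-h(x_k, v(x_k))) |h(x_(k-1), v(x_k))|. Sublinearity of h(x_k,-) applied to
d_k = v(x_k) + beta_k d_(k-1) then yields the sufficient descent condition.\<close>

definition support_fun :: "'a::real_inner set \<Rightarrow> 'a \<Rightarrow> real" where
  "support_fun S y = Sup ((\<lambda>w. inner y w) ` S)"

lemma hfun_eq_support_fun: "hfun JF C x d = support_fun C (JF x *v d)"
  by (simp add: hfun_def support_fun_def)

lemma support_fun_upper:
  assumes "bounded S" and "w \<in> S"
  shows "inner y w \<le> support_fun S y"
proof -
  obtain B where B: "\<forall>w\<in>S. norm w \<le> B" using assms(1) bounded_iff by blast
  have "inner y w' \<le> B * norm y" if "w' \<in> S" for w'
    using norm_cauchy_schwarz[of y w'] mult_left_mono[of "norm w'" B "norm y"] B that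
    by (simp add: mult.commute)
  then show ?thesis
    unfolding support_fun_def using assms(2) by (intro cSup_upper bdd_aboveI2) auto
qed

lemma support_fun_le_norm:
  assumes "\<forall>w\<in>S. norm w \<le> B" and "S \<noteq> {}"
  shows "\<bar>support_fun S y\<bar> \<le> B * norm y"
proof -
  have bound: "\<bar>inner y w\<bar> \<le> B * norm y" if "w \<in> S" for w
    using Cauchy_Schwarz_ineq2[of y w] mult_left_mono[of "norm w" B "norm y"] assms(1) that
    by (simp add: mult.commute)
  have "bounded S" using assms(1) bounded_iff by blast
  obtain w where w: "w \<in> S" using assms(2) by blast
  have "support_fun S y \<le> B * norm y"
    unfolding support_fun_def using assms(2) bound by (intro cSup_least) (auto simp: abs_le_iff)
  moreover have "- (B * norm y) \<le> support_fun S y"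
    using support_fun_upper[OF \<open>bounded S\<close> w, of y] bound[OF w] by linarith
  ultimately show ?thesis by linarith
qed

lemma support_fun_add_le:
  assumes "bounded S" and "S \<noteq> {}"
  shows "support_fun S (y + z) \<le> support_fun S y + support_fun S z"
  unfolding support_fun_def[of S "y + z"] using assms(2)
  by (intro cSup_least)
     (auto simp: inner_add_left intro: add_mono support_fun_upper[OF assms(1)])

lemma support_fun_scaleR_le:
  assumes "bounded S" and "S \<noteq> {}" and "t \<ge> 0"
  shows "support_fun S (t *\<^sub>R y) \<le> t * support_fun S y"
  unfolding support_fun_def[of S "t *\<^sub>R y"] using assms(2,3)
  by (intro cSup_least) (auto intro: mult_left_mono support_fun_upper[OF assms(1)])

lemma support_fun_lipschitz:
  assumes "\<forall>w\<in>S. norm w \<le> B" and "S \<noteq> {}"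
  shows "\<bar>support_fun S y - support_fun S z\<bar> \<le> B * norm (y - z)"
proof -
  have "bounded S" using assms(1) bounded_iff by blast
  then show ?thesis
    using support_fun_add_le[OF _ assms(2), of z "y - z"] support_fun_add_le[OF _ assms(2), of y "z - y"]
      support_fun_le_norm[OF assms, of "y - z"] support_fun_le_norm[OF assms, of "z - y"]
    by (simp add: norm_minus_commute)
qed

lemma continuous_on_support_fun:
  assumes "bounded S" and "S \<noteq> {}"
  shows "continuous_on UNIV (support_fun S)"
proof -
  obtain B where B: "\<forall>w\<in>S. norm w \<le> B" using assms(1) bounded_iff by blast
  then have "B \<ge> 0" using assms(2) norm_ge_zero order_trans by blast
  with B have "B-lipschitz_on UNIV (support_fun S)"
    using support_fun_lipschitz[OF B assms(2)] by (auto simp: lipschitz_on_def dist_real_def dist_norm)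
  then show ?thesis by (rule lipschitz_on_continuous_on)
qed

lemma sublinear_imp_convex_on:
  fixes h :: "'a::real_vector \<Rightarrow> real"
  assumes add: "\<And>u w. h (u + w) \<le> h u + h w"
    and scale: "\<And>t u. t \<ge> 0 \<Longrightarrow> h (t *\<^sub>R u) \<le> t * h u"
  shows "convex_on UNIV h"
proof (rule convex_onI)
  fix t :: real and u w
  assume "0 < t" "t < 1"
  then show "h ((1 - t) *\<^sub>R u + t *\<^sub>R w) \<le> (1 - t) * h u + t * h w"
    using add[of "(1 - t) *\<^sub>R u" "t *\<^sub>R w"] scale[of "1 - t" u] scale[of t w] by simp
qed simp

lemma regularized_min_exists:
  fixes h :: "'a::euclidean_space \<Rightarrow> real"
  assumes cont: "continuous_on UNIV h" and L: "L \<ge> 0" and bound: "\<And>d. \<bar>h d\<bar> \<le> L * norm d"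
  shows "\<exists>d. \<forall>d'. h d + 1/2 * (norm d)\<^sup>2 \<le> h d' + 1/2 * (norm d')\<^sup>2"
proof -
  define \<phi> where "\<phi> d = h d + 1/2 * (norm d)\<^sup>2" for d
  have "continuous_on (cball 0 (2 * L)) \<phi>"
    unfolding \<phi>_def by (intro continuous_intros continuous_on_subset[OF cont]) auto
  moreover have "cball 0 (2 * L) \<noteq> {}" using L by simp
  ultimately obtain d where d: "\<And>y. y \<in> cball 0 (2 * L) \<Longrightarrow> \<phi> d \<le> \<phi> y"
    using continuous_attains_inf[OF compact_cball] by blast
  have "\<phi> 0 = 0" using bound[of 0] by (simp add: \<phi>_def)
  have "\<phi> d \<le> \<phi> y" for y
  proof (cases "y \<in> cball 0 (2 * L)")
    case True
    then show ?thesis by (rule d)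
  next
    case False
    then have "0 \<le> norm y * (1/2 * norm y - L)" by simp
    also have "\<dots> \<le> \<phi> y"
    proof -
      have "- (L * norm y) \<le> h y" using bound[of y] by linarith
      then show ?thesis by (simp add: \<phi>_def power2_eq_square algebra_simps)
    qed
    finally show ?thesis using d[of 0] L \<open>\<phi> 0 = 0\<close> by simp
  qed
  then show ?thesis unfolding \<phi>_def by blast
qed

lemma regularized_min_unique:
  fixes h :: "'a::real_inner \<Rightarrow> real"
  assumes "convex_on UNIV h"
    and min1: "\<forall>d'. h d1 + 1/2 * (norm d1)\<^sup>2 \<le> h d' + 1/2 * (norm d')\<^sup>2"
    and min2: "\<forall>d'. h d2 + 1/2 * (norm d2)\<^sup>2 \<le> h d' + 1/2 * (norm d')\<^sup>2"
  shows "d1 = d2"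
proof -
  define m where "m = (1/2) *\<^sub>R d1 + (1/2) *\<^sub>R d2"
  have "h m \<le> 1/2 * h d1 + 1/2 * h d2"
    using convex_onD[OF assms(1), of "1/2" d1 d2] by (simp add: m_def)
  moreover have "(norm m)\<^sup>2 = 1/2 * (norm d1)\<^sup>2 + 1/2 * (norm d2)\<^sup>2 - 1/4 * (norm (d1 - d2))\<^sup>2"
    unfolding m_def power2_norm_eq_inner
    by (simp add: inner_add inner_diff inner_commute algebra_simps)
  ultimately have "(norm (d1 - d2))\<^sup>2 \<le> 0"
    using min1[rule_format, of m] min1[rule_format, of d2] min2[rule_format, of d1] by argo
  then show ?thesis by simp
qed

context
  fixes C :: "(real^'m) set"
  assumes C_bounded: "bounded C" and C_nonempty: "C \<noteq> {}"
begin

lemma hfun_add_le: "hfun JF C x (u + w) \<le> hfun JF C x u + hfun JF C x w"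
  using support_fun_add_le[OF C_bounded C_nonempty]
  by (simp add: hfun_eq_support_fun matrix_vector_right_distrib)

lemma hfun_scaleR_le: "t \<ge> 0 \<Longrightarrow> hfun JF C x (t *\<^sub>R u) \<le> t * hfun JF C x u"
  using support_fun_scaleR_le[OF C_bounded C_nonempty]
  by (simp add: hfun_eq_support_fun matrix_vector_mult_scaleR)

lemma continuous_on_hfun: "continuous_on UNIV (hfun JF C x)"
proof -
  have "hfun JF C x = support_fun C \<circ> (\<lambda>d. JF x *v d)"
    by (simp add: fun_eq_iff hfun_eq_support_fun)
  moreover have "continuous_on UNIV (\<lambda>d. JF x *v d)"
    by (rule linear_continuous_on[OF matrix_vector_mul_bounded_linear])
  ultimately show ?thesis
    using continuous_on_support_fun[OF C_bounded C_nonempty] by (metis continuous_on_compose continuous_on_subset subset_UNIV)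
qed

lemma hfun_linear_bound: "\<exists>L\<ge>0. \<forall>d. \<bar>hfun JF C x d\<bar> \<le> L * norm d"
proof -
  obtain B where B: "\<forall>w\<in>C. norm w \<le> B" using C_bounded bounded_iff by blast
  have "B \<ge> 0" using B C_nonempty norm_ge_zero order_trans by blast
  obtain M where M: "M > 0" "\<And>d. norm (JF x *v d) \<le> M * norm d"
    using linear_bounded_pos[OF matrix_vector_mul_linear] by blast
  have "\<bar>hfun JF C x d\<bar> \<le> (B * M) * norm d" for d
    using support_fun_le_norm[OF B C_nonempty, of "JF x *v d"] mult_left_mono[OF M(2)[of d] \<open>B \<ge> 0\<close>]
    by (simp add: hfun_eq_support_fun)
  with \<open>B \<ge> 0\<close> M(1) show ?thesis by (intro exI[of _ "B * M"]) auto
qed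

lemma vfun_minimizes:
  "hfun JF C x (vfun JF C x) + 1/2 * (norm (vfun JF C x))\<^sup>2 \<le> hfun JF C x d + 1/2 * (norm d)\<^sup>2"
proof -
  obtain L where "L \<ge> 0" "\<And>d. \<bar>hfun JF C x d\<bar> \<le> L * norm d"
    using hfun_linear_bound by blast
  with continuous_on_hfun have "\<exists>d. \<forall>d'. hfun JF C x d + 1/2 * (norm d)\<^sup>2 \<le> hfun JF C x d' + 1/2 * (norm d')\<^sup>2"
    by (rule regularized_min_exists)
  moreover have "convex_on UNIV (hfun JF C x)"
    using hfun_add_le hfun_scaleR_le by (rule sublinear_imp_convex_on)
  ultimately have "\<exists>!d. \<forall>d'. hfun JF C x d + 1/2 * (norm d)\<^sup>2 \<le> hfun JF C x d' + 1/2 * (norm d')\<^sup>2"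
    using regularized_min_unique by blast
  then show ?thesis unfolding vfun_def by (rule theI'[THEN spec])
qed

lemma hfun_vfun_nonpos: "hfun JF C x (vfun JF C x) \<le> 0"
proof -
  obtain L where "\<forall>d. \<bar>hfun JF C x d\<bar> \<le> L * norm d"
    using hfun_linear_bound by blast
  then have "hfun JF C x 0 = 0" by (metis abs_le_zero_iff mult_zero_right norm_zero)
  then have "hfun JF C x (vfun JF C x) + 1/2 * (norm (vfun JF C x))\<^sup>2 \<le> 0"
    using vfun_minimizes[of JF x 0] by simp
  moreover have "0 \<le> (norm (vfun JF C x))\<^sup>2" by simp
  ultimately show ?thesis by linarith
qed

lemma hfun_conjugate_direction_le:
  assumes "\<beta> \<ge> 0" and "\<beta> * hfun JF C x d \<le> - c * hfun JF C x v"
  shows "hfun JF C x (v + \<beta> *\<^sub>R d) \<le> (1 - c) * hfun JF C x v"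
proof -
  have "hfun JF C x (v + \<beta> *\<^sub>R d) \<le> hfun JF C x v + hfun JF C x (\<beta> *\<^sub>R d)"
    by (rule hfun_add_le)
  also have "\<dots> \<le> hfun JF C x v + \<beta> * hfun JF C x d"
    using hfun_scaleR_le[OF assms(1)] by simp
  also have "\<dots> \<le> (1 - c) * hfun JF C x v"
    using assms(2) by (simp add: algebra_simps)
  finally show ?thesis .
qed

end

lemma beta_k_bounds:
  assumes hv: "hfun JF C xk (vfun JF C xk) \<le> 0" and mu: "\<mu> > 0"
  shows "beta_k JF C \<mu> xp xk dp \<ge> 0"
    and "beta_k JF C \<mu> xp xk dp * hfun JF C xk dp \<le> - (2 / \<mu>) * hfun JF C xk (vfun JF C xk)"
proof -
  define hk a b where "hk = hfun JF C xk (vfun JF C xk)" and "a = hfun JF C xp (vfun JF C xk)"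
    and "b = hfun JF C xk dp"
  define D where "D = max (\<mu> * \<bar>b * a\<bar>) (- \<mu> * hfun JF C xp (vfun JF C xp) * \<bar>a\<bar>)"
  have \<beta>: "beta_k JF C \<mu> xp xk dp = (- hk * (\<bar>a\<bar> + a)) / D"
    by (simp add: beta_k_def hk_def a_def b_def D_def)
  have D_ge: "\<mu> * (\<bar>b\<bar> * \<bar>a\<bar>) \<le> D" by (simp add: D_def abs_mult)
  moreover have "0 \<le> \<mu> * (\<bar>b\<bar> * \<bar>a\<bar>)" using mu by simp
  ultimately have "D \<ge> 0" by linarith
  moreover have "- hk * (\<bar>a\<bar> + a) \<ge> 0" using hv by (intro mult_nonneg_nonneg) (auto simp: hk_def)
  ultimately show nonneg: "beta_k JF C \<mu> xp xk dp \<ge> 0" unfolding \<beta> by (simp add: divide_nonpos_nonneg)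
  have "- (2 / \<mu>) * hk \<ge> 0" using hv mu by (simp add: hk_def divide_nonpos_pos)
  have "beta_k JF C \<mu> xp xk dp * b \<le> - (2 / \<mu>) * hk"
  proof (cases "D = 0")
    case True
    then show ?thesis using \<open>- (2 / \<mu>) * hk \<ge> 0\<close> by (simp add: \<beta>)
  next
    case False
    with \<open>D \<ge> 0\<close> have "D > 0" by simp
    have "- hk * (\<bar>a\<bar> + a) * \<bar>b\<bar> \<le> - hk * (2 * \<bar>a\<bar>) * \<bar>b\<bar>"
      using hv by (intro mult_right_mono mult_left_mono) (auto simp: hk_def)
    also have "\<dots> = (- (2 / \<mu>) * hk) * (\<mu> * (\<bar>b\<bar> * \<bar>a\<bar>))" using mu by (simp add: field_simps)
    also have "\<dots> \<le> (- (2 / \<mu>) * hk) * D"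
      using D_ge \<open>- (2 / \<mu>) * hk \<ge> 0\<close> by (rule mult_left_mono)
    finally have "- hk * (\<bar>a\<bar> + a) * \<bar>b\<bar> / D \<le> - (2 / \<mu>) * hk"
      using \<open>D > 0\<close> by (simp only: pos_divide_le_eq)
    then have "beta_k JF C \<mu> xp xk dp * \<bar>b\<bar> \<le> - (2 / \<mu>) * hk"
      by (simp only: \<beta> times_divide_eq_left)
    moreover have "beta_k JF C \<mu> xp xk dp * b \<le> beta_k JF C \<mu> xp xk dp * \<bar>b\<bar>"
      using nonneg by (simp add: mult_left_mono)
    ultimately show ?thesis by linarith
  qed
  then show "beta_k JF C \<mu> xp xk dp * hfun JF C xk dp \<le> - (2 / \<mu>) * hfun JF C xk (vfun JF C xk)"
    by (simp add: b_def hk_def)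
qed

theorem mainTheorem1:
  fixes K C :: "(real^'m) set"
    and F :: "real^'n \<Rightarrow> real^'m"
    and JF :: "real^'n \<Rightarrow> real^'n^'m"
    and \<mu> :: real
    and x d :: "nat \<Rightarrow> real^'n"
    and \<alpha> :: "nat \<Rightarrow> real"
  assumes K_cone: "cone K" and K_convex: "convex K" and K_closed: "closed K"
    and K_pointed: "pointed K" and K_int: "interior K \<noteq> {}"
    and C_compact: "compact C" and C_zero: "0 \<notin> C"
    and K_dual: "pos_polar K = cone hull (convex hull C)"
    and F_deriv: "\<And>y. (F has_derivative (\<lambda>u. JF y *v u)) (at y)"
    and JF_cont: "continuous_on UNIV JF"
    and mu: "\<mu> > 2"
    and alpha_pos: "\<And>k. \<alpha> k > 0"
    and d0: "d 0 = vfun JF C (x 0)"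
    and dk: "\<And>k. k \<ge> 1 \<Longrightarrow> (\<forall>j\<le>k. vfun JF C (x j) \<noteq> 0) \<Longrightarrow>
              d k = vfun JF C (x k) + beta_k JF C \<mu> (x (k - 1)) (x k) (d (k - 1)) *\<^sub>R d (k - 1)"
    and xk: "\<And>k. (\<forall>j\<le>k. vfun JF C (x j) \<noteq> 0) \<Longrightarrow> x (Suc k) = x k + \<alpha> k *\<^sub>R d k"
  shows "\<forall>k. (\<forall>j\<le>k. vfun JF C (x j) \<noteq> 0) \<longrightarrow>
           hfun JF C (x k) (d k) \<le> (1 - 2 / \<mu>) * hfun JF C (x k) (vfun JF C (x k))"
proof (intro allI impI)
  fix k
  assume nonstop: "\<forall>j\<le>k. vfun JF C (x j) \<noteq> 0"
  have "0 \<in> pos_polar K" by (simp add: pos_polar_def)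
  then have C_nonempty: "C \<noteq> {}" using K_dual by (auto simp: cone_hull_empty)
  note C_bounded = compact_imp_bounded[OF C_compact]
  have hv: "hfun JF C (x k) (vfun JF C (x k)) \<le> 0"
    by (rule hfun_vfun_nonpos[OF C_bounded C_nonempty])
  show "hfun JF C (x k) (d k) \<le> (1 - 2 / \<mu>) * hfun JF C (x k) (vfun JF C (x k))"
  proof (cases k)
    case 0
    then show ?thesis using d0 hv mu by (simp add: algebra_simps divide_nonpos_pos)
  next
    case (Suc j)
    have "d k = vfun JF C (x k) + beta_k JF C \<mu> (x j) (x k) (d j) *\<^sub>R d j"
      using dk[of k] nonstop by (simp add: Suc)
    with beta_k_bounds[OF hv] mu show ?thesis
      by (simp add: hfun_conjugate_direction_le[OF C_bounded C_nonempty])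
  qed
qed

end
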